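(* Let $V\in(\mathbb{R}\cup\{-\infty\})^{n\times p}$ have no row and no column identically equal to $-\infty$, and $E=\{(i,k):V_{ik}\neq-\infty\}$. The operator $$T_i(x)=\inf_{k\in[p],\,(i,k)\in E}\Big[-V_{ik}+\max_{j\in[n],\,j\neq i}(V_{jk}+x_j)\Big],\qquad i\in[n],$$ can be evaluated at any point $x$ in $O(|E|)$ arithmetic operations.
   Context: $-\infty+c=-\infty$, $\max\emptyset=-\infty$. *)

theory Defs
  imports Complex_Main "HOL-Library.Extended_Real"
begin

(* Matrix V in (R \<union> {-\<infinity>})^{n x p}: entries V i k for i<n, k<p, never +\<infinity>.
   Indices are 0-based: [n] = {0..<n}, [p] = {0..<p}. *)

definition supp_E :: "nat \<Rightarrow> nat \<Rightarrow> (nat \<Rightarrow> nat \<Rightarrow> ereal) \<Rightarrow> (nat \<times> nat) set" where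
  "supp_E n p V = {(i,k). i < n \<and> k < p \<and> V i k \<noteq> -\<infinity>}"

(* max over the empty set is -\<infinity> (Sup {} = -\<infinity> in ereal) *)
definition opT :: "nat \<Rightarrow> nat \<Rightarrow> (nat \<Rightarrow> nat \<Rightarrow> ereal) \<Rightarrow> (nat \<Rightarrow> real) \<Rightarrow> nat \<Rightarrow> ereal" where
  "opT n p V x i =
     (INF k \<in> {k. k < p \<and> (i,k) \<in> supp_E n p V}.
        - V i k + (SUP j \<in> {j. j < n \<and> j \<noteq> i}. V j k + ereal (x j)))"

(* Arithmetic straight-line programs (arithmetic circuits) over R \<union> {\<plusminus>\<infinity>}.
   Each instruction produces one new register; arguments refer to earlier registers.
   Every instruction counts as one arithmetic operation. *)
datatype instr =
    IConst ereal
  | IInput nat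
  | IAdd nat nat
  | INeg nat
  | IMax nat nat
  | IMin nat nat

fun instr_wf :: "nat \<Rightarrow> instr \<Rightarrow> bool" where
  "instr_wf r (IConst c) = True"
| "instr_wf r (IInput j) = True"
| "instr_wf r (IAdd a b) = (a < r \<and> b < r)"
| "instr_wf r (INeg a) = (a < r)"
| "instr_wf r (IMax a b) = (a < r \<and> b < r)"
| "instr_wf r (IMin a b) = (a < r \<and> b < r)"

definition prog_wf :: "instr list \<Rightarrow> bool" where
  "prog_wf P = (\<forall>r < length P. instr_wf r (P ! r))"

fun instr_val :: "(nat \<Rightarrow> real) \<Rightarrow> ereal list \<Rightarrow> instr \<Rightarrow> ereal" where
  "instr_val x rs (IConst c) = c"
| "instr_val x rs (IInput j) = ereal (x j)"
| "instr_val x rs (IAdd a b) = rs ! a + rs ! b"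
| "instr_val x rs (INeg a) = - (rs ! a)"
| "instr_val x rs (IMax a b) = max (rs ! a) (rs ! b)"
| "instr_val x rs (IMin a b) = min (rs ! a) (rs ! b)"

definition prog_eval :: "instr list \<Rightarrow> (nat \<Rightarrow> real) \<Rightarrow> ereal list" where
  "prog_eval P x = foldl (\<lambda>rs ins. rs @ [instr_val x rs ins]) [] P"

end

theory Submission
  imports Defs
begin

text \<open>For a fixed column \<open>k\<close>, the maxima of \<open>V j k + x j\<close> over \<open>j \<noteq> i\<close>, for all \<open>i\<close> in
  the support of the column, are obtained together at a constant cost per support entry by
  combining a prefix maximum with a suffix maximum. Each \<open>T\<^sub>i(x)\<close> is then a minimum over the
  support of row \<open>i\<close>, costing one operation per entry plus one. Since every row meets \<open>E\<close>,
  \<open>n \<le> |E|\<close>, so both sweeps together cost \<open>O(|E|)\<close>.\<close>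

lemma length_prog_eval [simp]: "length (prog_eval P x) = length P"
  by (induction P rule: rev_induct) (simp_all add: prog_eval_def)

lemma prog_eval_snoc:
  "prog_eval (P @ [ins]) x = prog_eval P x @ [instr_val x (prog_eval P x) ins]"
  by (simp add: prog_eval_def)

lemma prog_eval_append_nth:
  "r < length P \<Longrightarrow> prog_eval (P @ Q) x ! r = prog_eval P x ! r"
proof (induction Q rule: rev_induct)
  case (snoc ins Q)
  then show ?case by (simp add: prog_eval_snoc nth_append flip: append_assoc)
qed simp

lemma prog_wf_snoc: "prog_wf (P @ [ins]) \<longleftrightarrow> prog_wf P \<and> instr_wf (length P) ins"
  by (auto simp: prog_wf_def nth_append less_Suc_eq)

definition computed :: "instr list \<Rightarrow> ((nat \<Rightarrow> real) \<Rightarrow> ereal) set" where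
  "computed P = {f. \<exists>r < length P. \<forall>x. prog_eval P x ! r = f x}"

definition extends_by :: "instr list \<Rightarrow> nat \<Rightarrow> instr list \<Rightarrow> bool" where
  "extends_by P c P' \<longleftrightarrow> prog_wf P' \<and> (\<exists>Q. P' = P @ Q \<and> length Q \<le> c)"

lemma extends_by_refl: "prog_wf P \<Longrightarrow> extends_by P 0 P"
  by (auto simp: extends_by_def)

lemma extends_by_trans: "extends_by P a P' \<Longrightarrow> extends_by P' b P'' \<Longrightarrow> extends_by P (a + b) P''"
  by (fastforce simp: extends_by_def)

lemma extends_by_mono: "extends_by P a P' \<Longrightarrow> a \<le> b \<Longrightarrow> extends_by P b P'"
  by (auto simp: extends_by_def)

lemma extends_by_wf: "extends_by P c P' \<Longrightarrow> prog_wf P'"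
  by (simp add: extends_by_def)

lemma extends_by_length: "extends_by P c P' \<Longrightarrow> length P' \<le> length P + c"
  by (auto simp: extends_by_def)

lemma computed_mono: "extends_by P c P' \<Longrightarrow> computed P \<subseteq> computed P'"
  unfolding extends_by_def computed_def
  by (auto simp: prog_eval_append_nth) (metis prog_eval_append_nth trans_less_add1)

lemma extends_by_snoc:
  assumes "prog_wf P" "instr_wf (length P) ins"
  shows "extends_by P 1 (P @ [ins]) \<and> (\<lambda>x. instr_val x (prog_eval P x) ins) \<in> computed (P @ [ins])"
  using assms unfolding extends_by_def computed_def
  by (auto simp: prog_wf_snoc prog_eval_snoc nth_append intro!: exI[of _ "length P"])

lemma computed_const: "prog_wf P \<Longrightarrow> \<exists>P'. extends_by P 1 P' \<and> (\<lambda>_. c) \<in> computed P'"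
  using extends_by_snoc[of P "IConst c"] by auto

lemma computed_input: "prog_wf P \<Longrightarrow> \<exists>P'. extends_by P 1 P' \<and> (\<lambda>x. ereal (x j)) \<in> computed P'"
  using extends_by_snoc[of P "IInput j"] by auto

lemma computed_binary:
  assumes "prog_wf P" "f \<in> computed P" "g \<in> computed P"
  shows computed_add: "\<exists>P'. extends_by P 1 P' \<and> (\<lambda>x. f x + g x) \<in> computed P'"
    and computed_max: "\<exists>P'. extends_by P 1 P' \<and> (\<lambda>x. max (f x) (g x)) \<in> computed P'"
    and computed_min: "\<exists>P'. extends_by P 1 P' \<and> (\<lambda>x. min (f x) (g x)) \<in> computed P'"
proof -
  obtain a b where "a < length P" "b < length P"
    and "\<And>x. prog_eval P x ! a = f x" "\<And>x. prog_eval P x ! b = g x"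
    using assms(2,3) by (auto simp: computed_def)
  then show "\<exists>P'. extends_by P 1 P' \<and> (\<lambda>x. f x + g x) \<in> computed P'"
    and "\<exists>P'. extends_by P 1 P' \<and> (\<lambda>x. max (f x) (g x)) \<in> computed P'"
    and "\<exists>P'. extends_by P 1 P' \<and> (\<lambda>x. min (f x) (g x)) \<in> computed P'"
    using extends_by_snoc[OF assms(1), of "IAdd a b"] extends_by_snoc[OF assms(1), of "IMax a b"]
      extends_by_snoc[OF assms(1), of "IMin a b"] by auto
qed

lemma computed_shift:
  assumes "prog_wf P" "f \<in> computed P"
  shows "\<exists>P'. extends_by P 2 P' \<and> (\<lambda>x. c + f x) \<in> computed P'"
proof -
  obtain P1 where P1: "extends_by P 1 P1" "(\<lambda>_. c) \<in> computed P1"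
    using computed_const[OF assms(1)] by blast
  obtain P2 where "extends_by P1 1 P2" "(\<lambda>x. c + f x) \<in> computed P2"
    using computed_add[OF extends_by_wf[OF P1(1)] P1(2)] assms(2) computed_mono[OF P1(1)] by blast
  then show ?thesis
    using extends_by_trans[OF P1(1)] by (metis one_add_one)
qed

lemma extends_by_foreach:
  assumes "finite I" "prog_wf P" "G \<subseteq> computed P"
    and step: "\<And>i P. i \<in> I \<Longrightarrow> prog_wf P \<Longrightarrow> G \<subseteq> computed P \<Longrightarrow>
      \<exists>P'. extends_by P (c i) P' \<and> F i \<subseteq> computed P'"
  shows "\<exists>P'. extends_by P (\<Sum>i\<in>I. c i) P' \<and> (\<Union>i\<in>I. F i) \<subseteq> computed P'"
  using assms
proof (induction I arbitrary: P rule: finite_induct)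
  case empty
  then show ?case using extends_by_refl by auto
next
  case (insert i I)
  obtain P1 where P1: "extends_by P (c i) P1" "F i \<subseteq> computed P1"
    using insert.prems by blast
  obtain P2 where P2: "extends_by P1 (\<Sum>i\<in>I. c i) P2" "(\<Union>i\<in>I. F i) \<subseteq> computed P2"
    using insert.IH[OF extends_by_wf[OF P1(1)]] insert.prems computed_mono[OF P1(1)] by blast
  show ?case
    using extends_by_trans[OF P1(1) P2(1)] P1(2) P2(2) computed_mono[OF P2(1)] insert.hyps
    by (intro exI[of _ P2]) auto
qed

lemma computed_INF:
  assumes "finite K" "prog_wf P" "g ` K \<subseteq> computed P"
  shows "\<exists>P'. extends_by P (card K + 1) P' \<and> (\<lambda>x. INF k\<in>K. g k x) \<in> computed P'"
  using assms
proof (induction K rule: finite_induct)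
  case empty
  then show ?case using computed_const[of P \<infinity>] by (simp add: top_ereal_def)
next
  case (insert k K)
  obtain P1 where P1: "extends_by P (card K + 1) P1" "(\<lambda>x. INF k\<in>K. g k x) \<in> computed P1"
    using insert by auto
  obtain P2 where P2: "extends_by P1 1 P2" "(\<lambda>x. min (g k x) (INF k\<in>K. g k x)) \<in> computed P2"
    using computed_min[OF extends_by_wf[OF P1(1)] _ P1(2)] insert.prems computed_mono[OF P1(1)]
    by blast
  have "extends_by P (card (insert k K) + 1) P2"
    using extends_by_trans[OF P1(1) P2(1)] insert.hyps by simp
  then show ?case
    using P2(2) by (auto simp: inf_min)
qed

lemma max_SUP_insert_remove:
  fixes f :: "'a \<Rightarrow> 'b::complete_linorder"
  assumes "j \<notin> J"
  shows "max a (SUP i\<in>insert j J - {j}. f i) = max a (SUP i\<in>J. f i)"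
    and "j' \<in> J \<Longrightarrow> max a (SUP i\<in>insert j J - {j'}. f i) = max (max a (f j)) (SUP i\<in>J - {j'}. f i)"
proof -
  show "max a (SUP i\<in>insert j J - {j}. f i) = max a (SUP i\<in>J. f i)"
    using assms by (simp add: insert_Diff_if)
  assume "j' \<in> J"
  then have "insert j J - {j'} = insert j (J - {j'})"
    using assms by auto
  then show "max a (SUP i\<in>insert j J - {j'}. f i) = max (max a (f j)) (SUP i\<in>J - {j'}. f i)"
    by (simp add: sup_max max.assoc)
qed

text \<open>Leave-one-out maxima in linear time: \<^term>\<open>A\<close> is the maximum of the entries
  already passed (a prefix maximum) and the supremum over \<^term>\<open>J\<close> a suffix maximum, so
  each entry excluded from both costs a constant number of operations.\<close>
lemma computed_SUP_all_but_one:
  fixes v :: "nat \<Rightarrow> ereal" and A :: "(nat \<Rightarrow> real) \<Rightarrow> ereal"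
  assumes "finite J" "prog_wf P" "(\<lambda>_. -\<infinity>) \<in> computed P" "A \<in> computed P"
  shows "\<exists>P'. extends_by P (8 * card J) P' \<and>
    (\<lambda>x. SUP j\<in>J. v j + ereal (x j)) \<in> computed P' \<and>
    (\<forall>j\<in>J. (\<lambda>x. - v j + max (A x) (SUP j'\<in>J - {j}. v j' + ereal (x j'))) \<in> computed P')"
  using assms
proof (induction J arbitrary: P A rule: finite_induct)
  case empty
  then show ?case using extends_by_refl by (auto simp: bot_ereal_def)
next
  case (insert j J)
  define w where "w x = v j + ereal (x j)" for x
  define S where "S x = (SUP j\<in>J. v j + ereal (x j))" for x
  obtain P1 where P1: "extends_by P 1 P1" "(\<lambda>x. ereal (x j)) \<in> computed P1"
    using computed_input[OF insert.prems(1)] by blast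
  obtain P2 where P2: "extends_by P1 2 P2" "w \<in> computed P2"
    using computed_shift[OF extends_by_wf[OF P1(1)] P1(2)] unfolding w_def by blast
  obtain P3 where P3: "extends_by P2 1 P3" "(\<lambda>x. max (A x) (w x)) \<in> computed P3"
    using computed_max[OF extends_by_wf[OF P2(1)] _ P2(2)] insert.prems
      computed_mono[OF P1(1)] computed_mono[OF P2(1)] by blast
  obtain P4 where P4: "extends_by P3 (8 * card J) P4" "S \<in> computed P4"
    "\<forall>j'\<in>J. (\<lambda>x. - v j' + max (max (A x) (w x)) (SUP j''\<in>J - {j'}. v j'' + ereal (x j'')))
      \<in> computed P4"
    using insert.IH[OF extends_by_wf[OF P3(1)] _ P3(2)] insert.prems
      computed_mono[OF P1(1)] computed_mono[OF P2(1)] computed_mono[OF P3(1)]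
    unfolding S_def by blast
  obtain P5 where P5: "extends_by P4 1 P5" "(\<lambda>x. max (A x) (S x)) \<in> computed P5"
    using computed_max[OF extends_by_wf[OF P4(1)] _ P4(2)] insert.prems
      computed_mono[OF P1(1)] computed_mono[OF P2(1)] computed_mono[OF P3(1)]
      computed_mono[OF P4(1)] by blast
  obtain P6 where P6: "extends_by P5 2 P6" "(\<lambda>x. - v j + max (A x) (S x)) \<in> computed P6"
    using computed_shift[OF extends_by_wf[OF P5(1)] P5(2)] by blast
  obtain P7 where P7: "extends_by P6 1 P7" "(\<lambda>x. max (w x) (S x)) \<in> computed P7"
    using computed_max[OF extends_by_wf[OF P6(1)]] P2(2) P4(2) computed_mono[OF P3(1)]
      computed_mono[OF P4(1)] computed_mono[OF P5(1)] computed_mono[OF P6(1)] by blast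
  have "extends_by P (1 + 2 + 1 + 8 * card J + 1 + 2 + 1) P7"
    by (rule extends_by_trans[OF extends_by_trans[OF extends_by_trans[OF
          extends_by_trans[OF extends_by_trans[OF extends_by_trans[OF
          P1(1) P2(1)] P3(1)] P4(1)] P5(1)] P6(1)] P7(1)])
  then have "extends_by P (8 * card (insert j J)) P7"
    using insert.hyps by (auto elim: extends_by_mono)
  moreover have "\<forall>j'\<in>insert j J.
      (\<lambda>x. - v j' + max (A x) (SUP j''\<in>insert j J - {j'}. v j'' + ereal (x j''))) \<in> computed P7"
    using P4(3) P6(2) insert.hyps(2)
      computed_mono[OF P5(1)] computed_mono[OF P6(1)] computed_mono[OF P7(1)]
    by (auto simp: max_SUP_insert_remove w_def S_def)
  moreover have "(\<lambda>x. SUP j\<in>insert j J. v j + ereal (x j)) \<in> computed P7"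
    using P7(2) by (simp add: w_def S_def sup_max)
  ultimately show ?case by blast
qed

definition opT_term :: "nat \<Rightarrow> (nat \<Rightarrow> nat \<Rightarrow> ereal) \<Rightarrow> nat \<Rightarrow> nat \<Rightarrow> (nat \<Rightarrow> real) \<Rightarrow> ereal" where
  "opT_term n V i k x = - V i k + (SUP j\<in>{j. j < n \<and> j \<noteq> i}. V j k + ereal (x j))"

lemma opT_eq_INF_opT_term:
  "opT n p V x i = (INF k\<in>{k. k < p \<and> (i, k) \<in> supp_E n p V}. opT_term n V i k x)"
  by (simp add: opT_def opT_term_def)

lemma opT_term_column_support:
  "opT_term n V i k x = - V i k + (SUP j\<in>{j. j < n \<and> V j k \<noteq> -\<infinity>} - {i}. V j k + ereal (x j))"
proof -
  have "{j. j < n \<and> j \<noteq> i} =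
      ({j. j < n \<and> V j k \<noteq> -\<infinity>} - {i}) \<union> {j. j < n \<and> j \<noteq> i \<and> V j k = -\<infinity>}"
    by auto
  moreover have "(SUP j\<in>{j. j < n \<and> j \<noteq> i \<and> V j k = -\<infinity>}. V j k + ereal (x j)) =
      (SUP j\<in>{j. j < n \<and> j \<noteq> i \<and> V j k = -\<infinity>}. -\<infinity>)"
    by (rule SUP_cong) auto
  ultimately show ?thesis
    by (simp add: opT_term_def SUP_union flip: bot_ereal_def)
qed

lemma card_supp_E_rows: "card (supp_E n p V) = (\<Sum>i<n. card {k. (i, k) \<in> supp_E n p V})"
proof -
  have "finite {k. (i, k) \<in> supp_E n p V}" for i
    by (rule finite_subset[of _ "{..<p}"]) (auto simp: supp_E_def)
  moreover have "card (supp_E n p V) = card (SIGMA i:{..<n}. {k. (i, k) \<in> supp_E n p V})"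
    by (rule arg_cong[of _ _ card]) (auto simp: supp_E_def)
  ultimately show ?thesis
    by (simp add: card_SigmaI)
qed

lemma card_supp_E_columns: "card (supp_E n p V) = (\<Sum>k<p. card {i. (i, k) \<in> supp_E n p V})"
proof -
  let ?S = "SIGMA k:{..<p}. {i. (i, k) \<in> supp_E n p V}"
  have "finite {i. (i, k) \<in> supp_E n p V}" for k
    by (rule finite_subset[of _ "{..<n}"]) (auto simp: supp_E_def)
  moreover have "card (supp_E n p V) = card (prod.swap ` ?S)"
    by (rule arg_cong[of _ _ card]) (auto simp: supp_E_def image_iff)
  moreover have "card (prod.swap ` ?S) = card ?S"
    by (rule card_image[OF inj_swap])
  ultimately show ?thesis
    by (simp add: card_SigmaI)
qed

lemma computed_opT_terms:
  assumes "prog_wf P" "(\<lambda>_. -\<infinity>) \<in> computed P"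
  shows "\<exists>P'. extends_by P (8 * card (supp_E n p V)) P' \<and>
    (\<lambda>(i, k). opT_term n V i k) ` supp_E n p V \<subseteq> computed P'"
proof -
  define col where "col k = {i. (i, k) \<in> supp_E n p V}" for k
  have "\<exists>P'. extends_by P (\<Sum>k<p. 8 * card (col k)) P' \<and>
      (\<Union>k<p. (\<lambda>i. opT_term n V i k) ` col k) \<subseteq> computed P'"
  proof (rule extends_by_foreach[where G = "{\<lambda>_. -\<infinity>}"])
    fix k P assume k: "k \<in> {..<p}" and "prog_wf P" "{\<lambda>_. -\<infinity>} \<subseteq> computed P"
    moreover have col: "col k = {i. i < n \<and> V i k \<noteq> -\<infinity>}"
      using k by (auto simp: col_def supp_E_def)
    ultimately obtain P' where "extends_by P (8 * card (col k)) P'"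
      "\<forall>i\<in>col k. (\<lambda>x. - V i k + max (-\<infinity>) (SUP j\<in>col k - {i}. V j k + ereal (x j)))
        \<in> computed P'"
      using computed_SUP_all_but_one[of "col k" P "\<lambda>_. -\<infinity>" "\<lambda>j. V j k"] by auto
    then show "\<exists>P'. extends_by P (8 * card (col k)) P' \<and>
        (\<lambda>i. opT_term n V i k) ` col k \<subseteq> computed P'"
      unfolding col by (auto simp: opT_term_column_support[abs_def])
  qed (use assms in auto)
  moreover have "(\<lambda>(i, k). opT_term n V i k) ` supp_E n p V \<subseteq> (\<Union>k<p. (\<lambda>i. opT_term n V i k) ` col k)"
    by (auto simp: col_def supp_E_def)
  moreover have "(\<Sum>k<p. 8 * card (col k)) = 8 * card (supp_E n p V)"
    by (simp add: card_supp_E_columns[of n p V] sum_distrib_left col_def)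
  ultimately show ?thesis
    by (metis (no_types, lifting) order_trans)
qed

lemma computed_opT:
  assumes "prog_wf P" "(\<lambda>(i, k). opT_term n V i k) ` supp_E n p V \<subseteq> computed P"
    and rows: "\<forall>i<n. \<exists>k<p. V i k \<noteq> -\<infinity>"
  shows "\<exists>P'. extends_by P (2 * card (supp_E n p V)) P' \<and>
    (\<lambda>i x. opT n p V x i) ` {..<n} \<subseteq> computed P'"
proof -
  define row where "row i = {k. k < p \<and> (i, k) \<in> supp_E n p V}" for i
  have "\<exists>P'. extends_by P (\<Sum>i<n. card (row i) + 1) P' \<and>
      (\<Union>i<n. {\<lambda>x. opT n p V x i}) \<subseteq> computed P'"
  proof (rule extends_by_foreach[where G = "(\<lambda>(i, k). opT_term n V i k) ` supp_E n p V"])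
    fix i P assume "i \<in> {..<n}" "prog_wf P"
      and "(\<lambda>(i, k). opT_term n V i k) ` supp_E n p V \<subseteq> computed P"
    then have "opT_term n V i ` row i \<subseteq> computed P"
      by (auto simp: row_def)
    then show "\<exists>P'. extends_by P (card (row i) + 1) P' \<and> {\<lambda>x. opT n p V x i} \<subseteq> computed P'"
      using computed_INF[of "row i" P] \<open>prog_wf P\<close>
      by (simp add: row_def opT_eq_INF_opT_term[abs_def])
  qed (use assms in auto)
  then obtain P' where P': "extends_by P (\<Sum>i<n. card (row i) + 1) P'"
    "(\<Union>i<n. {\<lambda>x. opT n p V x i}) \<subseteq> computed P'"
    by blast
  have "(\<Sum>i<n. card (row i) + 1) \<le> (\<Sum>i<n. 2 * card (row i))"
  proof (rule sum_mono)
    fix i assume "i \<in> {..<n}"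
    then have "row i \<noteq> {}" using rows by (auto simp: row_def supp_E_def)
    moreover have "finite (row i)" by (simp add: row_def)
    ultimately show "card (row i) + 1 \<le> 2 * card (row i)"
      by (simp add: card_gt_0_iff Suc_leI)
  qed
  moreover have "(\<Sum>i<n. 2 * card (row i)) = 2 * card (supp_E n p V)"
  proof -
    have "row i = {k. (i, k) \<in> supp_E n p V}" for i
      by (auto simp: row_def supp_E_def)
    then show ?thesis
      by (simp add: card_supp_E_rows[of n p V] sum_distrib_left)
  qed
  ultimately have "extends_by P (2 * card (supp_E n p V)) P'"
    using extends_by_mono[OF P'(1)] by simp
  moreover have "(\<lambda>i x. opT n p V x i) ` {..<n} \<subseteq> computed P'"
    using P'(2) by auto
  ultimately show ?thesis
    by blast
qed

lemma opT_program:
  assumes "\<forall>i<n. \<exists>k<p. V i k \<noteq> -\<infinity>"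
  shows "\<exists>P. prog_wf P \<and> length P \<le> 11 * card (supp_E n p V) \<and>
    (\<lambda>i x. opT n p V x i) ` {..<n} \<subseteq> computed P"
proof (cases "n = 0")
  case True
  then show ?thesis by (intro exI[of _ "[]"]) (simp add: prog_wf_def)
next
  case False
  then obtain k where "(0, k) \<in> supp_E n p V"
    using assms by (auto simp: supp_E_def)
  moreover have "finite (supp_E n p V)"
    by (rule finite_subset[of _ "{..<n} \<times> {..<p}"]) (auto simp: supp_E_def)
  ultimately have nonempty: "1 \<le> card (supp_E n p V)"
    by (auto simp: Suc_le_eq card_gt_0_iff)
  obtain P0 where P0: "extends_by [] 1 P0" "(\<lambda>_. -\<infinity>) \<in> computed P0"
    using computed_const[of "[]"] by (auto simp: prog_wf_def)
  obtain P1 where P1: "extends_by P0 (8 * card (supp_E n p V)) P1"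
    "(\<lambda>(i, k). opT_term n V i k) ` supp_E n p V \<subseteq> computed P1"
    using computed_opT_terms[OF extends_by_wf[OF P0(1)] P0(2)] by blast
  obtain P2 where P2: "extends_by P1 (2 * card (supp_E n p V)) P2"
    "(\<lambda>i x. opT n p V x i) ` {..<n} \<subseteq> computed P2"
    using computed_opT[OF extends_by_wf[OF P1(1)] P1(2) assms] by blast
  have "length P2 \<le> 1 + 8 * card (supp_E n p V) + 2 * card (supp_E n p V)"
    using extends_by_length[OF extends_by_trans[OF extends_by_trans[OF P0(1) P1(1)] P2(1)]] by simp
  then show ?thesis
    using nonempty extends_by_wf[OF P2(1)] P2(2) by (intro exI[of _ P2]) auto
qed

theorem proposition6p1:
  "\<exists>C::nat. \<forall>(n::nat) (p::nat) (V::nat \<Rightarrow> nat \<Rightarrow> ereal).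
     (\<forall>i<n. \<forall>k<p. V i k \<noteq> \<infinity>) \<and>
     (\<forall>i<n. \<exists>k<p. V i k \<noteq> -\<infinity>) \<and>
     (\<forall>k<p. \<exists>i<n. V i k \<noteq> -\<infinity>) \<longrightarrow>
     (\<exists>(P::instr list) (out::nat \<Rightarrow> nat).
        prog_wf P \<and> length P \<le> C * card (supp_E n p V) \<and>
        (\<forall>i<n. out i < length P) \<and>
        (\<forall>x::nat \<Rightarrow> real. \<forall>i<n. prog_eval P x ! out i = opT n p V x i))"
proof (intro exI[of _ 11] allI impI)
  fix n p :: nat and V :: "nat \<Rightarrow> nat \<Rightarrow> ereal"
  assume "(\<forall>i<n. \<forall>k<p. V i k \<noteq> \<infinity>) \<and> (\<forall>i<n. \<exists>k<p. V i k \<noteq> -\<infinity>) \<and>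
    (\<forall>k<p. \<exists>i<n. V i k \<noteq> -\<infinity>)"
  \<comment> \<open>Only the nonempty rows are used: the program evaluates the defining expression
    literally, so neither \<open>\<infinity>\<close> entries nor empty columns need special treatment.\<close>
  then have "\<forall>i<n. \<exists>k<p. V i k \<noteq> -\<infinity>"
    by blast
  then obtain P where P: "prog_wf P" "length P \<le> 11 * card (supp_E n p V)"
    "(\<lambda>i x. opT n p V x i) ` {..<n} \<subseteq> computed P"
    using opT_program by blast
  then have "\<forall>i<n. \<exists>r<length P. \<forall>x. prog_eval P x ! r = opT n p V x i"
    by (auto simp: computed_def)
  then obtain out where "\<forall>i<n. out i < length P \<and> (\<forall>x. prog_eval P x ! out i = opT n p V x i)"
    by metis
  then show "\<exists>P out. prog_wf P \<and> length P \<le> 11 * card (supp_E n p V) \<and> (\<forall>i<n. out i < length P) \<and>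
      (\<forall>x. \<forall>i<n. prog_eval P x ! out i = opT n p V x i)"
    using P by blast
qed

end
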